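(* Let $(X,d)$ be a quasi-pseudometric space. If every $\bar d$-bounded sequence in $X$ contains a $d^s$-convergent subsequence, then $X$ is right Smyth complete, i.e. every right $d$-$K$-Cauchy sequence in $X$ is $d^s$-convergent.
   Context: A quasi-pseudometric on $X$ is a map $d:X\times X\to[0,\infty)$ with $d(x,x)=0$ and $d(x,z)\le d(x,y)+d(y,z)$ for all $x,y,z$. Its conjugate is $\bar d(x,y)=d(y,x)$ and $d^s(x,y)=\max\{d(x,y),d(y,x)\}$ (a pseudometric); $x_n$ is $d^s$-convergent to $x$ iff $d(x,x_n)\to0$ and $d(x_n,x)\to0$. A set $Y\subseteq X$ is $\bar d$-bounded if there are $x\in X$, $r>0$ with $\bar d(x,y)\le r$ for all $y\in Y$; a sequence is $\bar d$-bounded if its set of terms is. A sequence $(x_n)$ is right $d$-$K$-Cauchy if for every $\varepsilon>0$ there is $n_\varepsilon$ such that $d(x_m,x_n)<\varepsilon$ whenever $n_\varepsilon\le n<m$. *)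

theory Defs
  imports Main "HOL-Analysis.Analysis"
begin

definition quasi_pseudometric :: "('a \<Rightarrow> 'a \<Rightarrow> real) \<Rightarrow> bool" where
  "quasi_pseudometric d \<longleftrightarrow>
     (\<forall>x y. 0 \<le> d x y) \<and> (\<forall>x. d x x = 0) \<and> (\<forall>x y z. d x z \<le> d x y + d y z)"

definition conj_qpm :: "('a \<Rightarrow> 'a \<Rightarrow> real) \<Rightarrow> 'a \<Rightarrow> 'a \<Rightarrow> real" where
  "conj_qpm d x y = d y x"

definition sym_qpm :: "('a \<Rightarrow> 'a \<Rightarrow> real) \<Rightarrow> 'a \<Rightarrow> 'a \<Rightarrow> real" where
  "sym_qpm d x y = max (d x y) (d y x)"

definition qconv :: "('a \<Rightarrow> 'a \<Rightarrow> real) \<Rightarrow> (nat \<Rightarrow> 'a) \<Rightarrow> 'a \<Rightarrow> bool" where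
  "qconv e s x \<longleftrightarrow> ((\<lambda>n. e x (s n)) \<longlonglongrightarrow> 0)"

definition ds_convergent :: "('a \<Rightarrow> 'a \<Rightarrow> real) \<Rightarrow> (nat \<Rightarrow> 'a) \<Rightarrow> bool" where
  "ds_convergent d s \<longleftrightarrow> (\<exists>x. qconv (sym_qpm d) s x)"

definition bounded_wrt :: "('a \<Rightarrow> 'a \<Rightarrow> real) \<Rightarrow> 'a set \<Rightarrow> bool" where
  "bounded_wrt e Y \<longleftrightarrow> (\<exists>x r. r > 0 \<and> (\<forall>y\<in>Y. e x y \<le> r))"

definition seq_bounded_wrt :: "('a \<Rightarrow> 'a \<Rightarrow> real) \<Rightarrow> (nat \<Rightarrow> 'a) \<Rightarrow> bool" where
  "seq_bounded_wrt e s \<longleftrightarrow> bounded_wrt e (range s)"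

definition right_K_Cauchy :: "('a \<Rightarrow> 'a \<Rightarrow> real) \<Rightarrow> (nat \<Rightarrow> 'a) \<Rightarrow> bool" where
  "right_K_Cauchy d s \<longleftrightarrow>
     (\<forall>\<epsilon>>0. \<exists>N. \<forall>n m. N \<le> n \<and> n < m \<longrightarrow> d (s m) (s n) < \<epsilon>)"

definition right_Smyth_complete :: "('a \<Rightarrow> 'a \<Rightarrow> real) \<Rightarrow> bool" where
  "right_Smyth_complete d \<longleftrightarrow> (\<forall>s. right_K_Cauchy d s \<longrightarrow> ds_convergent d s)"

end

theory Submission
  imports Defs
begin

text \<open>All terms \<open>s m\<close> with \<open>m > N\<close> of a right K-Cauchy sequence satisfy
  \<open>d (s m) (s N) < 1\<close>, so the sequence is bounded for the conjugate \<open>conj_qpm d\<close>.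
  The subsequence given by the hypothesis then converges in \<open>sym_qpm d\<close>, and the Cauchy
  condition spreads its limit to the whole sequence, one direction of \<open>d\<close> at a time.\<close>

lemma quasi_pseudometricD:
  assumes "quasi_pseudometric d"
  shows "0 \<le> d x y" and "d x z \<le> d x y + d y z"
  using assms unfolding quasi_pseudometric_def by auto

lemma qconv_iff:
  assumes "\<And>x y. 0 \<le> e x y"
  shows "qconv e s x \<longleftrightarrow> (\<forall>\<epsilon>>0. \<exists>N. \<forall>n\<ge>N. e x (s n) < \<epsilon>)"
  unfolding qconv_def LIMSEQ_iff using assms by simp

lemma qconv_sym_qpm_iff:
  assumes "quasi_pseudometric d"
  shows "qconv (sym_qpm d) s x \<longleftrightarrow> qconv d s x \<and> qconv (conj_qpm d) s x"
proof
  note nonneg = quasi_pseudometricD(1)[OF assms]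
  assume "qconv (sym_qpm d) s x"
  then have sym: "(\<lambda>n. max (d x (s n)) (d (s n) x)) \<longlonglongrightarrow> 0"
    unfolding qconv_def sym_qpm_def .
  have "(\<lambda>n. d x (s n)) \<longlonglongrightarrow> 0"
    by (rule tendsto_sandwich[OF _ _ tendsto_const sym]) (auto simp: nonneg)
  moreover have "(\<lambda>n. d (s n) x) \<longlonglongrightarrow> 0"
    by (rule tendsto_sandwich[OF _ _ tendsto_const sym]) (auto simp: nonneg)
  ultimately show "qconv d s x \<and> qconv (conj_qpm d) s x"
    unfolding qconv_def conj_qpm_def by simp
next
  assume "qconv d s x \<and> qconv (conj_qpm d) s x"
  then have "(\<lambda>n. max (d x (s n)) (d (s n) x)) \<longlonglongrightarrow> max 0 0"
    unfolding qconv_def conj_qpm_def by (intro tendsto_max) auto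
  then show "qconv (sym_qpm d) s x" unfolding qconv_def sym_qpm_def by simp
qed

lemma right_K_Cauchy_imp_seq_bounded_conj:
  assumes "quasi_pseudometric d" and "right_K_Cauchy d s"
  shows "seq_bounded_wrt (conj_qpm d) s"
proof -
  note nonneg = quasi_pseudometricD(1)[OF assms(1)]
  obtain N where N: "\<And>n m. N \<le> n \<Longrightarrow> n < m \<Longrightarrow> d (s m) (s n) < 1"
    using assms(2) unfolding right_K_Cauchy_def by (meson zero_less_one)
  define r where "r = 1 + (\<Sum>k\<le>N. d (s k) (s N))"
  have sum_nonneg: "0 \<le> (\<Sum>k\<le>N. d (s k) (s N))"
    by (simp add: nonneg sum_nonneg)
  have "d (s k) (s N) \<le> r" for k
  proof (cases "k \<le> N")
    case True
    then have "d (s k) (s N) \<le> (\<Sum>k\<le>N. d (s k) (s N))"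
      by (intro member_le_sum) (auto simp: nonneg)
    then show ?thesis unfolding r_def by simp
  next
    case False
    then show ?thesis using N[of N k] sum_nonneg unfolding r_def by simp
  qed
  moreover have "r > 0" unfolding r_def using sum_nonneg by simp
  ultimately show ?thesis
    unfolding seq_bounded_wrt_def bounded_wrt_def conj_qpm_def by auto
qed

lemma right_K_Cauchy_subseq_conj_limit:
  assumes "quasi_pseudometric d" and "right_K_Cauchy d s" and "strict_mono \<phi>"
    and "qconv (conj_qpm d) (s \<circ> \<phi>) x"
  shows "qconv (conj_qpm d) s x"
proof -
  have nonneg: "\<And>x y. 0 \<le> conj_qpm d x y"
    using quasi_pseudometricD(1)[OF assms(1)] unfolding conj_qpm_def by simp
  have "\<exists>M. \<forall>n\<ge>M. d (s n) x < \<epsilon>" if "\<epsilon> > 0" for \<epsilon>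
  proof -
    obtain N where N: "\<And>n m. N \<le> n \<Longrightarrow> n < m \<Longrightarrow> d (s m) (s n) < \<epsilon>/2"
      using assms(2) \<open>\<epsilon> > 0\<close> unfolding right_K_Cauchy_def by (meson half_gt_zero)
    obtain K where K: "\<And>k. K \<le> k \<Longrightarrow> d (s (\<phi> k)) x < \<epsilon>/2"
      using assms(4) \<open>\<epsilon> > 0\<close> unfolding qconv_iff[OF nonneg] conj_qpm_def
      by (metis half_gt_zero o_apply)
    define k where "k = max K N"
    have "N \<le> \<phi> k" using seq_suble[OF assms(3), of k] unfolding k_def by linarith
    have "d (s n) x < \<epsilon>" if "Suc (\<phi> k) \<le> n" for n
      using quasi_pseudometricD(2)[OF assms(1), of "s n" x "s (\<phi> k)"]
        N[OF \<open>N \<le> \<phi> k\<close>, of n] K[of k] that unfolding k_def by simp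
    then show ?thesis by blast
  qed
  then show ?thesis unfolding qconv_iff[OF nonneg] conj_qpm_def by blast
qed

lemma right_K_Cauchy_subseq_limit:
  assumes "quasi_pseudometric d" and "right_K_Cauchy d s" and "strict_mono \<phi>"
    and "qconv d (s \<circ> \<phi>) x"
  shows "qconv d s x"
proof -
  note nonneg = quasi_pseudometricD(1)[OF assms(1)]
  have "\<exists>M. \<forall>n\<ge>M. d x (s n) < \<epsilon>" if "\<epsilon> > 0" for \<epsilon>
  proof -
    obtain N where N: "\<And>n m. N \<le> n \<Longrightarrow> n < m \<Longrightarrow> d (s m) (s n) < \<epsilon>/2"
      using assms(2) \<open>\<epsilon> > 0\<close> unfolding right_K_Cauchy_def by (meson half_gt_zero)
    obtain K where K: "\<And>k. K \<le> k \<Longrightarrow> d x (s (\<phi> k)) < \<epsilon>/2"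
      using assms(4) \<open>\<epsilon> > 0\<close> unfolding qconv_iff[OF nonneg]
      by (metis half_gt_zero o_apply)
    have "d x (s n) < \<epsilon>" if "N \<le> n" for n
    proof -
      \<comment> \<open>pass through a term of the subsequence lying beyond \<open>s n\<close>\<close>
      define k where "k = max K (Suc n)"
      have "n < \<phi> k" using seq_suble[OF assms(3), of k] unfolding k_def by linarith
      then show ?thesis
        using quasi_pseudometricD(2)[OF assms(1), of x "s n" "s (\<phi> k)"]
          N[OF that, of "\<phi> k"] K[of k] unfolding k_def by simp
    qed
    then show ?thesis by blast
  qed
  then show ?thesis unfolding qconv_iff[OF nonneg] by blast
qed

theorem mainTheorem2:
  fixes d :: "'a \<Rightarrow> 'a \<Rightarrow> real"
  assumes "quasi_pseudometric d"
    and "\<forall>s. seq_bounded_wrt (conj_qpm d) s \<longrightarrow>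
              (\<exists>\<phi>. strict_mono \<phi> \<and> ds_convergent d (s \<circ> \<phi>))"
  shows "right_Smyth_complete d"
  unfolding right_Smyth_complete_def
proof (intro allI impI)
  fix s assume Cauchy: "right_K_Cauchy d s"
  then have "seq_bounded_wrt (conj_qpm d) s"
    using right_K_Cauchy_imp_seq_bounded_conj assms(1) by blast
  then obtain \<phi> x where \<phi>: "strict_mono \<phi>" and "qconv (sym_qpm d) (s \<circ> \<phi>) x"
    using assms(2) unfolding ds_convergent_def by blast
  then have "qconv d (s \<circ> \<phi>) x" and "qconv (conj_qpm d) (s \<circ> \<phi>) x"
    using qconv_sym_qpm_iff[OF assms(1)] by auto
  then have "qconv d s x" and "qconv (conj_qpm d) s x"
    using right_K_Cauchy_subseq_limit[OF assms(1) Cauchy \<phi>]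
      right_K_Cauchy_subseq_conj_limit[OF assms(1) Cauchy \<phi>] by auto
  then have "qconv (sym_qpm d) s x"
    using qconv_sym_qpm_iff[OF assms(1)] by auto
  then show "ds_convergent d s" unfolding ds_convergent_def by blast
qed

end
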